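(* Let $H=H_1\times R$ be a connected non-trivial core such that $H_1$ is truly projective and $R\not\cong K_1^*$, and let $w\in V(R)$. Then there exist a graph $F$ and vertices $u^*,v^*\in V(F)$ such that: (a) for every edge $xy\in E(H_1)$ there is a homomorphism $f\colon F\to H$ with $f(u^* )=(x,w)$ and $f(v^* )=(y,w)$; (b) for every homomorphism $f\colon F\to H$, writing $f_1=\pi_1\circ f$ for the first coordinate of $f$ (with values in $V(H_1)$), we have $f_1(u^* )f_1(v^* )\in E(H_1)$.
   Context: Graphs are finite, undirected, without parallel edges, loops allowed; $K_1^*$ is the one-vertex graph with a loop. A homomorphism is an edge-preserving vertex map. A core is a graph with no homomorphism to a proper subgraph of itself; it is trivial if isomorphic to $K_1$, $K_1^*$ or $K_2$, non-trivial otherwise. Graphs $G,H$ are incomparable if there is no homomorphism $G\to H$ and none $H\to G$. The direct product $H_1\times H_2$ has vertex set $V(H_1)\times V(H_2)$ with $(x_1,y_1)(x_2,y_2)$ an edge iff $x_1x_2\in E(H_1)$ and $y_1y_2\in E(H_2)$; $H^m$ is the $m$-fold product and $\pi_i$ the $i$-th coordinate projection. $H$ is truly projective if it has at least three vertices and for every $s\ge2$ and every connected core $W$ incomparable with $H$, every homomorphism $f\colon H^s\times W\to H$ satisfying $f(x,\dots,x,y)=x$ for all $x\in V(H)$, $y\in V(W)$ equals $\pi_i$ for some $i\in[s]$. *)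

theory Defs
  imports Main
begin

text \<open>Finite undirected graphs with loops allowed: a vertex set and a symmetric
  edge relation (ordered pairs, both orientations present).\<close>

record 'a graph =
  verts :: "'a set"
  arcs  :: "('a \<times> 'a) set"

definition graph :: "('a, 'm) graph_scheme \<Rightarrow> bool" where
  "graph G \<longleftrightarrow> finite (verts G) \<and> arcs G \<subseteq> verts G \<times> verts G \<and> sym (arcs G)"

definition hom :: "('a, 'm) graph_scheme \<Rightarrow> ('b, 'n) graph_scheme \<Rightarrow> ('a \<Rightarrow> 'b) \<Rightarrow> bool" where
  "hom G H f \<longleftrightarrow> (\<forall>x\<in>verts G. f x \<in> verts H) \<and>
                   (\<forall>x y. (x, y) \<in> arcs G \<longrightarrow> (f x, f y) \<in> arcs H)"

definition subgraph :: "'a graph \<Rightarrow> 'a graph \<Rightarrow> bool" where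
  "subgraph G' G \<longleftrightarrow> graph G' \<and> verts G' \<subseteq> verts G \<and> arcs G' \<subseteq> arcs G"

definition core :: "'a graph \<Rightarrow> bool" where
  "core G \<longleftrightarrow> graph G \<and> \<not> (\<exists>G' f. subgraph G' G \<and> G' \<noteq> G \<and> hom G G' f)"

definition iso :: "'a graph \<Rightarrow> 'b graph \<Rightarrow> bool" where
  "iso G H \<longleftrightarrow> (\<exists>f. bij_betw f (verts G) (verts H) \<and>
     (\<forall>x\<in>verts G. \<forall>y\<in>verts G. (x, y) \<in> arcs G \<longleftrightarrow> (f x, f y) \<in> arcs H))"

definition K1 :: "unit graph" where "K1 = \<lparr>verts = {()}, arcs = {}\<rparr>"
definition K1star :: "unit graph" where "K1star = \<lparr>verts = {()}, arcs = {((), ())}\<rparr>"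
definition K2 :: "bool graph" where "K2 = \<lparr>verts = UNIV, arcs = {(True, False), (False, True)}\<rparr>"

definition trivial_graph :: "'a graph \<Rightarrow> bool" where
  "trivial_graph G \<longleftrightarrow> iso G K1 \<or> iso G K1star \<or> iso G K2"

definition connected_graph :: "'a graph \<Rightarrow> bool" where
  "connected_graph G \<longleftrightarrow> verts G \<noteq> {} \<and> (\<forall>x\<in>verts G. \<forall>y\<in>verts G. (x, y) \<in> (arcs G)\<^sup>*)"

definition incomparable :: "'a graph \<Rightarrow> 'b graph \<Rightarrow> bool" where
  "incomparable G H \<longleftrightarrow> \<not> (\<exists>f. hom G H f) \<and> \<not> (\<exists>f. hom H G f)"

definition dprod :: "'a graph \<Rightarrow> 'b graph \<Rightarrow> ('a \<times> 'b) graph" where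
  "dprod G H = \<lparr>verts = verts G \<times> verts H,
     arcs = {((x1, y1), (x2, y2)). (x1, x2) \<in> arcs G \<and> (y1, y2) \<in> arcs H}\<rparr>"

definition gpow :: "'a graph \<Rightarrow> nat \<Rightarrow> 'a list graph" where
  "gpow H m = \<lparr>verts = {xs. length xs = m \<and> set xs \<subseteq> verts H},
     arcs = {(xs, ys). length xs = m \<and> length ys = m \<and> (\<forall>i<m. (xs ! i, ys ! i) \<in> arcs H)}\<rparr>"

text \<open>Truly projective. The connected cores W range over graphs on nat
  (every finite graph is isomorphic to one).\<close>
definition truly_projective :: "'a graph \<Rightarrow> bool" where
  "truly_projective H \<longleftrightarrow> card (verts H) \<ge> 3 \<and>
    (\<forall>s\<ge>2. \<forall>W :: nat graph. connected_graph W \<and> core W \<and> incomparable W H \<longrightarrow>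
      (\<forall>f. hom (dprod (gpow H s) W) H f \<and>
           (\<forall>x\<in>verts H. \<forall>y\<in>verts W. f (replicate s x, y) = x) \<longrightarrow>
           (\<exists>i<s. \<forall>v\<in>verts (dprod (gpow H s) W). f v = fst v ! i)))"

end

theory Submission
  imports Defs
begin

text \<open>
  The gadget is \<open>F = H1\<^sup>n \<times> R\<close> with \<open>u = (x\<^sub>1, \<dots>, x\<^sub>n, w)\<close> and
  \<open>v = (y\<^sub>1, \<dots>, y\<^sub>n, w)\<close>, where the \<open>(x\<^sub>j, y\<^sub>j)\<close> list the arcs of \<open>H1\<close>;
  coordinate projections give (a). For (b) let \<open>g = \<pi>\<^sub>1 \<circ> f : H1\<^sup>n \<times> R \<rightarrow> H1\<close> and
  \<open>d x r = g (x, \<dots>, x, r)\<close>. The map \<open>(x, r) \<mapsto> (d x r, r)\<close> is an endomorphism, hence an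
  automorphism, of the core \<open>H\<close>; undoing it fibrewise turns \<open>g\<close> into an idempotent
  polymorphism, which by true projectivity of \<open>H1\<close> (\<open>R\<close> being a connected core incomparable
  with \<open>H1\<close>) is a projection \<open>\<pi>\<^sub>i\<close>. So \<open>g (xs, r) = d (xs ! i) r\<close>. Finally \<open>d x r\<close>
  does not change along walks of even length in \<open>R\<close>, because \<open>d x r\<close> and \<open>d x r'\<close> are
  twins in the core \<open>H1\<close>; and \<open>R\<close> is not bipartite, since otherwise \<open>H\<close> would retract
  onto an edge. Taking a neighbour \<open>w'\<close> of \<open>w\<close> reachable by an even walk,
  \<open>d x\<^sub>i w \<sim> d y\<^sub>i w' = d y\<^sub>i w\<close>.
\<close>

lemma graph_arcsD: "graph G \<Longrightarrow> (x, y) \<in> arcs G \<Longrightarrow> x \<in> verts G \<and> y \<in> verts G"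
  unfolding graph_def by blast

lemma graph_symD: "graph G \<Longrightarrow> (x, y) \<in> arcs G \<Longrightarrow> (y, x) \<in> arcs G"
  unfolding graph_def by (meson symD)

lemma verts_dprod [simp]: "verts (dprod G K) = verts G \<times> verts K"
  by (simp add: dprod_def)

lemma arcs_dprod [simp]: "((a, b), (c, d)) \<in> arcs (dprod G K) \<longleftrightarrow> (a, c) \<in> arcs G \<and> (b, d) \<in> arcs K"
  by (simp add: dprod_def)

lemma verts_gpow [simp]: "xs \<in> verts (gpow G m) \<longleftrightarrow> length xs = m \<and> set xs \<subseteq> verts G"
  by (simp add: gpow_def)

lemma arcs_gpow [simp]:
  "(xs, ys) \<in> arcs (gpow G m) \<longleftrightarrow> length xs = m \<and> length ys = m \<and> (\<forall>i<m. (xs ! i, ys ! i) \<in> arcs G)"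
  by (simp add: gpow_def)

lemma dprod_arcsD: "(p, q) \<in> arcs (dprod G K) \<Longrightarrow> (fst p, fst q) \<in> arcs G \<and> (snd p, snd q) \<in> arcs K"
  by (cases p, cases q) simp

lemma graph_dprod: "graph G \<Longrightarrow> graph K \<Longrightarrow> graph (dprod G K)"
  unfolding graph_def dprod_def sym_def by auto

lemma gpow_arcsD:
  assumes "graph G" "(xs, ys) \<in> arcs (gpow G n)"
  shows "xs \<in> verts (gpow G n) \<and> ys \<in> verts (gpow G n)"
proof -
  have "xs ! i \<in> verts G \<and> ys ! i \<in> verts G" if "i < n" for i
    using assms that graph_arcsD[OF assms(1)] by auto
  then show ?thesis
    using assms(2) by (auto simp: in_set_conv_nth)
qed

lemma graph_gpow:
  assumes "graph G"
  shows "graph (gpow G n)"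
  unfolding graph_def
proof (intro conjI)
  have "finite {xs. set xs \<subseteq> verts G \<and> length xs = n}"
    using assms finite_lists_length_eq unfolding graph_def by blast
  then show "finite (verts (gpow G n))"
    by (simp add: gpow_def conj_commute)
  show "arcs (gpow G n) \<subseteq> verts (gpow G n) \<times> verts (gpow G n)"
    using gpow_arcsD[OF assms] by (auto simp del: arcs_gpow verts_gpow)
  show "sym (arcs (gpow G n))"
    using graph_symD[OF assms] by (auto simp: sym_def)
qed

lemma hom_comp: "hom G H f \<Longrightarrow> hom H K g \<Longrightarrow> hom G K (g \<circ> f)"
  unfolding hom_def by simp

lemma hom_fst_dprod: "hom (dprod G K) G fst"
  unfolding hom_def dprod_def by auto

lemma hom_snd_dprod: "hom (dprod G K) K snd"
  unfolding hom_def dprod_def by auto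

lemma hom_rtrancl:
  assumes "hom G H f" "(x, y) \<in> (arcs G)\<^sup>*"
  shows "(f x, f y) \<in> (arcs H)\<^sup>*"
  using assms(2)
proof (induction rule: rtrancl_induct)
  case (step y z)
  then have "(f y, f z) \<in> arcs H"
    using assms(1) unfolding hom_def by blast
  with step.IH show ?case
    by (rule rtrancl.rtrancl_into_rtrancl)
qed simp

lemma connected_graph_hom_onto:
  assumes "hom G H f" "f ` verts G = verts H" "connected_graph G"
  shows "connected_graph H"
  unfolding connected_graph_def
proof (intro conjI ballI)
  show "verts H \<noteq> {}"
    using assms(2,3) unfolding connected_graph_def by blast
next
  fix a b assume "a \<in> verts H" "b \<in> verts H"
  then obtain x y where "x \<in> verts G" "y \<in> verts G" "a = f x" "b = f y"
    using assms(2) by blast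
  then show "(a, b) \<in> (arcs H)\<^sup>*"
    using assms(3) hom_rtrancl[OF assms(1)] unfolding connected_graph_def by simp
qed

section \<open>Cores\<close>

lemma core_graph: "core G \<Longrightarrow> graph G"
  unfolding core_def by blast

lemma core_endo_onto:
  assumes "core G" "hom G G f"
  shows "f ` verts G = verts G" "map_prod f f ` arcs G = arcs G"
proof -
  define G' where "G' = \<lparr>verts = f ` verts G, arcs = map_prod f f ` arcs G\<rparr>"
  have G: "graph G"
    using core_graph[OF assms(1)] .
  have "sym (map_prod f f ` arcs G)"
    unfolding sym_def
  proof (intro allI impI)
    fix p q assume "(p, q) \<in> map_prod f f ` arcs G"
    then obtain a b where "(a, b) \<in> arcs G" "p = f a" "q = f b"
      by force
    then show "(q, p) \<in> map_prod f f ` arcs G"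
      using graph_symD[OF G] by force
  qed
  then have "graph G'"
    using G assms(2) unfolding G'_def graph_def hom_def by auto
  then have "subgraph G' G"
    using assms(2) unfolding subgraph_def G'_def hom_def by auto
  moreover have "hom G G' f"
    using assms(2) unfolding hom_def G'_def by auto
  ultimately have "G' = G"
    using assms(1) unfolding core_def by blast
  then show "f ` verts G = verts G" "map_prod f f ` arcs G = arcs G"
    unfolding G'_def by (metis graph.select_convs)+
qed

lemma coreI:
  assumes "graph G"
    and "\<And>f. hom G G f \<Longrightarrow> verts G \<subseteq> f ` verts G \<and> arcs G \<subseteq> map_prod f f ` arcs G"
  shows "core G"
  unfolding core_def
proof (intro conjI notI)
  assume "\<exists>G' f. subgraph G' G \<and> G' \<noteq> G \<and> hom G G' f"
  then obtain G' f where sub: "subgraph G' G" and ne: "G' \<noteq> G" and f: "hom G G' f"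
    by blast
  have "hom G G f"
    using sub f unfolding subgraph_def hom_def by blast
  then have "verts G \<subseteq> f ` verts G" "arcs G \<subseteq> map_prod f f ` arcs G"
    using assms(2) by simp_all
  moreover have "f ` verts G \<subseteq> verts G'" "map_prod f f ` arcs G \<subseteq> arcs G'"
    using f unfolding hom_def by auto
  ultimately have "verts G' = verts G" "arcs G' = arcs G"
    using sub unfolding subgraph_def by (meson order_trans antisym)+
  then have "G' = G"
    by (intro graph.equality) simp_all
  with ne show False ..
qed (fact assms(1))

lemma core_endo_inverse:
  assumes "core G" "hom G G f"
  obtains g where "hom G G g" "\<And>x. x \<in> verts G \<Longrightarrow> g (f x) = x"
    "\<And>x. x \<in> verts G \<Longrightarrow> f (g x) = x"
proof -
  have onto: "f ` verts G = verts G" "map_prod f f ` arcs G = arcs G"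
    using core_endo_onto[OF assms] by simp_all
  have "finite (verts G)"
    using core_graph[OF assms(1)] unfolding graph_def by blast
  with onto(1) have inj: "inj_on f (verts G)"
    by (simp add: finite_surj_inj)
  define g where "g = the_inv_into (verts G) f"
  have gf: "g (f x) = x" if "x \<in> verts G" for x
    using inj that unfolding g_def by (rule the_inv_into_f_f)
  have fg: "f (g x) = x" "g x \<in> verts G" if "x \<in> verts G" for x
    using inj that onto(1) unfolding g_def
    by (auto intro: f_the_inv_into_f the_inv_into_into)
  have "(g x, g y) \<in> arcs G" if xy: "(x, y) \<in> arcs G" for x y
  proof -
    obtain a b where ab: "(a, b) \<in> arcs G" "x = f a" "y = f b"
      using xy onto(2) by force
    then show ?thesis
      using gf graph_arcsD[OF core_graph[OF assms(1)]] by auto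
  qed
  then have "hom G G g"
    using fg unfolding hom_def by blast
  then show ?thesis
    using that gf fg by blast
qed

lemma core_retract:
  assumes "core G" "graph H" "hom G H h" "hom H G h'"
    and "\<And>y. y \<in> verts H \<Longrightarrow> h (h' y) = y"
  shows "core H"
proof (rule coreI[OF assms(2)])
  fix f assume f: "hom H H f"
  have "hom G G (h' \<circ> f \<circ> h)"
    using hom_comp[OF hom_comp[OF assms(3) f] assms(4)] by (simp add: comp_assoc)
  note onto = core_endo_onto[OF assms(1) this]
  have pull: "z = f (h x)" if "z \<in> verts H" "x \<in> verts G" "h' z = h' (f (h x))" for z x
  proof -
    have "z = h (h' z)"
      using assms(5)[OF that(1)] by simp
    also have "\<dots> = h (h' (f (h x)))"
      using that(3) by simp
    also have "\<dots> = f (h x)"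
      using assms(3,5) f that(2) unfolding hom_def by blast
    finally show ?thesis .
  qed
  show "verts H \<subseteq> f ` verts H \<and> arcs H \<subseteq> map_prod f f ` arcs H"
  proof (intro conjI subsetI)
    fix y assume y: "y \<in> verts H"
    then have "h' y \<in> verts G"
      using assms(4) unfolding hom_def by blast
    then obtain x where x: "x \<in> verts G" "h' y = h' (f (h x))"
      using onto(1) by force
    then have "h x \<in> verts H"
      using assms(3) unfolding hom_def by blast
    with pull[OF y x] show "y \<in> f ` verts H"
      by blast
  next
    fix e assume e: "e \<in> arcs H"
    then obtain a b where ab: "e = (a, b)" "a \<in> verts H" "b \<in> verts H"
      using graph_arcsD[OF assms(2)] by (cases e) blast
    have "(h' a, h' b) \<in> arcs G"
      using assms(4) e ab(1) unfolding hom_def by blast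
    then obtain c d where cd: "(c, d) \<in> arcs G" "h' a = h' (f (h c))" "h' b = h' (f (h d))"
      using onto(2) by force
    moreover have "c \<in> verts G" "d \<in> verts G"
      using graph_arcsD[OF core_graph[OF assms(1)] cd(1)] by auto
    ultimately have "e = map_prod f f (h c, h d)"
      using pull ab by simp
    moreover have "(h c, h d) \<in> arcs H"
      using assms(3) cd(1) unfolding hom_def by blast
    ultimately show "e \<in> map_prod f f ` arcs H"
      by blast
  qed
qed

lemma core_twins_eq:
  assumes "core G" "a \<in> verts G" "b \<in> verts G"
    and twins: "\<And>z. (a, z) \<in> arcs G \<longleftrightarrow> (b, z) \<in> arcs G"
  shows "a = b"
proof (rule ccontr)
  assume "a \<noteq> b"
  define f where "f x = (if x = a then b else x)" for x
  have sym: "(y, x) \<in> arcs G" if "(x, y) \<in> arcs G" for x y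
    using graph_symD[OF core_graph[OF assms(1)] that] .
  have "(f x, f y) \<in> arcs G" if xy: "(x, y) \<in> arcs G" for x y
  proof (cases "x = a"; cases "y = a")
    assume "x = a" "y = a"
    then have "(b, b) \<in> arcs G"
      using xy twins sym by blast
    with \<open>x = a\<close> \<open>y = a\<close> show ?thesis
      by (simp add: f_def)
  next
    assume "x \<noteq> a" "y = a"
    then have "(x, b) \<in> arcs G"
      using xy twins sym by blast
    with \<open>x \<noteq> a\<close> \<open>y = a\<close> show ?thesis
      by (simp add: f_def)
  qed (use xy twins in \<open>simp_all add: f_def\<close>)
  then have "hom G G f"
    using assms(3) unfolding hom_def f_def by auto
  then have "a \<in> f ` verts G"
    using core_endo_onto(1)[OF assms(1)] assms(2) by blast
  with \<open>a \<noteq> b\<close> show False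
    unfolding f_def by auto
qed

section \<open>Walks of even length\<close>

lemma sym_relcomp_self: "sym E \<Longrightarrow> sym (E O E)"
  unfolding sym_def by blast

lemma even_walk_then_edge:
  assumes "(a, b) \<in> (E O E)\<^sup>*" "(b, c) \<in> E"
  shows "\<exists>m. (a, m) \<in> E \<and> (m, c) \<in> (E O E)\<^sup>*"
  using assms
proof (induction arbitrary: c rule: rtrancl_induct)
  case base
  then show ?case
    by (blast intro: rtrancl_refl)
next
  case (step y z)
  from \<open>(y, z) \<in> E O E\<close> obtain p where "(y, p) \<in> E" "(p, z) \<in> E"
    by (rule relcompE) simp
  with step.IH obtain m where "(a, m) \<in> E" "(m, p) \<in> (E O E)\<^sup>*"
    by blast
  moreover have "(p, c) \<in> E O E"
    using \<open>(p, z) \<in> E\<close> \<open>(z, c) \<in> E\<close> by (rule relcompI)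
  ultimately show ?case
    using rtrancl.rtrancl_into_rtrancl by fast
qed

lemma walk_parity:
  assumes "(a, r) \<in> E\<^sup>*"
  shows "(a, r) \<in> (E O E)\<^sup>* \<or> (\<exists>p. (a, p) \<in> (E O E)\<^sup>* \<and> (p, r) \<in> E)"
  using assms
proof (induction rule: rtrancl_induct)
  case (step y z)
  from step.IH show ?case
  proof
    assume "(a, y) \<in> (E O E)\<^sup>*"
    with \<open>(y, z) \<in> E\<close> show ?thesis
      by (intro disjI2 exI conjI)
  next
    assume "\<exists>p. (a, p) \<in> (E O E)\<^sup>* \<and> (p, y) \<in> E"
    then obtain p where "(a, p) \<in> (E O E)\<^sup>*" "(p, y) \<in> E"
      by blast
    have "(p, z) \<in> E O E"
      using \<open>(p, y) \<in> E\<close> \<open>(y, z) \<in> E\<close> by (rule relcompI)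
    with \<open>(a, p) \<in> (E O E)\<^sup>*\<close> have "(a, z) \<in> (E O E)\<^sup>*"
      by (rule rtrancl.rtrancl_into_rtrancl)
    then show ?thesis ..
  qed
qed simp

lemma even_reachability_two_colours:
  assumes "sym E" "(w, a) \<in> E\<^sup>*" "(a, b) \<in> E"
    and no_odd: "\<And>w'. (w, w') \<in> E \<Longrightarrow> (w, w') \<notin> (E O E)\<^sup>*"
  shows "(w, a) \<in> (E O E)\<^sup>* \<longleftrightarrow> (w, b) \<notin> (E O E)\<^sup>*"
proof (intro iffI notI)
  have even_sym: "sym ((E O E)\<^sup>*)"
    using sym_rtrancl[OF sym_relcomp_self[OF assms(1)]] .
  assume wa: "(w, a) \<in> (E O E)\<^sup>*" and wb: "(w, b) \<in> (E O E)\<^sup>*"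
  have "(b, a) \<in> E"
    using assms(1,3) by (rule symD)
  then obtain m where wm: "(w, m) \<in> E" and ma: "(m, a) \<in> (E O E)\<^sup>*"
    using even_walk_then_edge[OF wb] by blast
  have "(a, w) \<in> (E O E)\<^sup>*"
    using even_sym wa by (rule symD)
  with ma have "(m, w) \<in> (E O E)\<^sup>*"
    by (rule rtrancl_trans)
  with even_sym have "(w, m) \<in> (E O E)\<^sup>*"
    by (rule symD)
  with no_odd[OF wm] show False
    by contradiction
next
  assume wb: "(w, b) \<notin> (E O E)\<^sup>*"
  show "(w, a) \<in> (E O E)\<^sup>*"
  proof (rule ccontr)
    assume "(w, a) \<notin> (E O E)\<^sup>*"
    with walk_parity[OF assms(2)] obtain p where wp: "(w, p) \<in> (E O E)\<^sup>*" and pa: "(p, a) \<in> E"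
      by blast
    have "(p, b) \<in> E O E"
      using pa assms(3) by (rule relcompI)
    with wp have "(w, b) \<in> (E O E)\<^sup>*"
      by (rule rtrancl.rtrancl_into_rtrancl)
    with wb show False
      by contradiction
  qed
qed

section \<open>Cores of direct products\<close>

lemma core_dprod_swap:
  assumes "core (dprod G K)" "graph G" "graph K"
  shows "core (dprod K G)"
proof (rule core_retract[OF assms(1) graph_dprod[OF assms(3,2)]])
  show "hom (dprod G K) (dprod K G) prod.swap" "hom (dprod K G) (dprod G K) prod.swap"
    unfolding hom_def dprod_def by auto
qed simp

lemma core_dprod_right:
  assumes "core (dprod G K)" "graph G" "graph K" "(x, x') \<in> arcs G"
  shows "core K"
proof (rule coreI[OF assms(3)])
  fix f assume f: "hom K K f"
  have "hom (dprod G K) (dprod G K) (map_prod id f)"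
    using f unfolding hom_def dprod_def by auto
  note onto = core_endo_onto[OF assms(1) this]
  have x: "x \<in> verts G"
    using graph_arcsD[OF assms(2,4)] ..
  show "verts K \<subseteq> f ` verts K \<and> arcs K \<subseteq> map_prod f f ` arcs K"
  proof (intro conjI subsetI)
    fix r assume "r \<in> verts K"
    then have "(x, r) \<in> map_prod id f ` verts (dprod G K)"
      using x onto(1) by simp
    then show "r \<in> f ` verts K"
      by force
  next
    fix e assume "e \<in> arcs K"
    then obtain r s where "e = (r, s)" "(r, s) \<in> arcs K"
      by (cases e) blast
    then have "((x, r), (x', s)) \<in> map_prod (map_prod id f) (map_prod id f) ` arcs (dprod G K)"
      using assms(4) onto(2) by simp
    then obtain p q where "(p, q) \<in> arcs (dprod G K)" "(x, r) = map_prod id f p" "(x', s) = map_prod id f q"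
      by auto
    then have "(snd p, snd q) \<in> arcs K" "r = f (snd p)" "s = f (snd q)"
      by (cases p, cases q, simp)+
    then show "e \<in> map_prod f f ` arcs K"
      using \<open>e = (r, s)\<close> by (metis map_prod_simp rev_image_eqI)
  qed
qed

lemma core_dprod_left:
  assumes "core (dprod G K)" "graph G" "graph K" "(r, r') \<in> arcs K"
  shows "core G"
  using core_dprod_right[OF core_dprod_swap[OF assms(1-3)] assms(3,2,4)] .

lemma core_dprod_card_left_le_1:
  assumes "core (dprod G K)" "graph K" "hom K G \<psi>" "verts K \<noteq> {}"
  shows "card (verts G) \<le> 1"
proof -
  have "hom (dprod G K) (dprod G K) (\<lambda>(x, r). (\<psi> r, r))"
    using assms(3) unfolding hom_def dprod_def by auto
  then have "(\<lambda>(x, r). (\<psi> r, r)) ` (verts G \<times> verts K) = verts G \<times> verts K"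
    using core_endo_onto(1)[OF assms(1)] by simp
  moreover have "(\<lambda>(x, r). (\<psi> r, r)) ` (verts G \<times> verts K) \<subseteq> (\<lambda>r. (\<psi> r, r)) ` verts K"
    by auto
  ultimately have sub: "verts G \<times> verts K \<subseteq> (\<lambda>r. (\<psi> r, r)) ` verts K"
    by simp
  have fin: "finite (verts K)"
    using assms(2) unfolding graph_def by blast
  have "card (verts G \<times> verts K) \<le> card ((\<lambda>r. (\<psi> r, r)) ` verts K)"
    using fin sub by (intro card_mono) simp_all
  also have "\<dots> \<le> card (verts K)"
    using fin by (rule card_image_le)
  finally have "card (verts G) * card (verts K) \<le> card (verts K)"
    by (simp add: card_cartesian_product)
  moreover have "card (verts K) > 0"
    using assms(2,4) unfolding graph_def by (simp add: card_gt_0_iff)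
  ultimately show ?thesis
    by simp
qed

lemma core_dprod_card_right_le_1:
  assumes "core (dprod G K)" "graph G" "graph K" "hom G K \<psi>" "verts G \<noteq> {}"
  shows "card (verts K) \<le> 1"
  using core_dprod_card_left_le_1[OF core_dprod_swap[OF assms(1-3)] assms(2,4,5)] .

lemma core_dprod_card_le_2_if_two_coloured:
  assumes "core (dprod G K)" "graph G" "graph K" "(x, y) \<in> arcs G" "(r, s) \<in> arcs K"
    and colouring: "\<And>a b. (a, b) \<in> arcs K \<Longrightarrow> a \<in> S \<longleftrightarrow> b \<notin> S"
  shows "card (verts (dprod G K)) \<le> 2"
proof -
  define f where "f z = (if snd z \<in> S then (x, r) else (y, s))" for z :: "'a \<times> 'b"
  have edge: "((x, r), (y, s)) \<in> arcs (dprod G K)" "((y, s), (x, r)) \<in> arcs (dprod G K)"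
    using assms(4,5) graph_symD[OF assms(2)] graph_symD[OF assms(3)] by simp_all
  have "(f p, f q) \<in> arcs (dprod G K)" if "(p, q) \<in> arcs (dprod G K)" for p q
  proof -
    have "(snd p, snd q) \<in> arcs K"
      using that by (cases p, cases q) simp
    then show ?thesis
      using colouring edge unfolding f_def by auto
  qed
  moreover have "f z \<in> verts (dprod G K)" for z
    using graph_arcsD[OF graph_dprod[OF assms(2,3)] edge(1)] unfolding f_def by simp
  ultimately have "hom (dprod G K) (dprod G K) f"
    unfolding hom_def by blast
  then have "verts (dprod G K) = f ` verts (dprod G K)"
    using core_endo_onto(1)[OF assms(1)] by simp
  also have "\<dots> \<subseteq> {(x, r), (y, s)}"
    unfolding f_def by auto
  finally have "verts (dprod G K) \<subseteq> {(x, r), (y, s)}" .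
  then have "card (verts (dprod G K)) \<le> card {(x, r), (y, s)}"
    by (intro card_mono) simp_all
  also have "\<dots> \<le> 2"
    by (simp add: card_insert_if)
  finally show ?thesis .
qed

lemma connected_dprod_edges:
  assumes "connected_graph (dprod G K)" "graph G" "card (verts G) \<ge> 2" "w \<in> verts K"
  obtains x y w' where "(x, y) \<in> arcs G" "(w, w') \<in> arcs K"
proof -
  have "finite (verts G)"
    using assms(2) unfolding graph_def by blast
  with assms(3) have "\<not> (\<forall>a\<in>verts G. \<forall>b\<in>verts G. a = b)"
    by (subst card_le_Suc0_iff_eq[symmetric]) simp_all
  then obtain x x' where "x \<in> verts G" "x' \<in> verts G" "x \<noteq> x'"
    by blast
  then have "((x, w), (x', w)) \<in> (arcs (dprod G K))\<^sup>*"
    using assms(1,4) unfolding connected_graph_def by simp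
  then obtain p where "((x, w), p) \<in> arcs (dprod G K)"
    using \<open>x \<noteq> x'\<close> by (cases rule: converse_rtranclE) auto
  then show ?thesis
    using that dprod_arcsD by fastforce
qed

lemma core_dprod_odd_neighbour:
  assumes core: "core (dprod G K)" "graph G" "graph K"
    and "connected_graph K" "w \<in> verts K" "(x, y) \<in> arcs G" "(w, w0) \<in> arcs K"
    and "card (verts G) \<ge> 3"
  obtains w' where "(w, w') \<in> arcs K" "(w, w') \<in> (arcs K O arcs K)\<^sup>*"
proof -
  have "\<exists>w'. (w, w') \<in> arcs K \<and> (w, w') \<in> (arcs K O arcs K)\<^sup>*"
  proof (rule ccontr)
    assume "\<nexists>w'. (w, w') \<in> arcs K \<and> (w, w') \<in> (arcs K O arcs K)\<^sup>*"
    then have no_odd: "\<And>w'. (w, w') \<in> arcs K \<Longrightarrow> (w, w') \<notin> (arcs K O arcs K)\<^sup>*"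
      by blast
    define S where "S = {r. (w, r) \<in> (arcs K O arcs K)\<^sup>*}"
    have "a \<in> S \<longleftrightarrow> b \<notin> S" if "(a, b) \<in> arcs K" for a b
    proof -
      have "(w, a) \<in> (arcs K)\<^sup>*"
        using assms(4,5) graph_arcsD[OF core(3) that] unfolding connected_graph_def by blast
      then show ?thesis
        using even_reachability_two_colours[OF _ _ that no_odd] core(3)
        unfolding S_def graph_def by blast
    qed
    then have "card (verts (dprod G K)) \<le> 2"
      using core_dprod_card_le_2_if_two_coloured[OF core assms(6,7)] by blast
    moreover have "card (verts K) \<ge> 1"
      using assms(5) core(3) unfolding graph_def by (auto simp: Suc_le_eq card_gt_0_iff)
    then have "3 * 1 \<le> card (verts G) * card (verts K)"
      using assms(8) by (rule mult_le_mono[rotated])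
    ultimately show False
      by (simp add: card_cartesian_product)
  qed
  with that show ?thesis
    by blast
qed

lemma iso_K1starI:
  assumes "verts K = {r}" "(r, r) \<in> arcs K"
  shows "iso K K1star"
  unfolding iso_def K1star_def using assms
  by (intro exI[of _ "\<lambda>_. ()"]) (auto simp: bij_betw_def inj_on_def)

lemma core_dprod_incomparable:
  assumes core: "core (dprod G K)" "graph G" "graph K"
    and "card (verts G) \<ge> 2" "(w, w') \<in> arcs K" "\<not> iso K K1star"
  shows "incomparable K G"
  unfolding incomparable_def
proof (intro conjI notI; elim exE)
  have K: "w \<in> verts K" "w' \<in> verts K"
    using graph_arcsD[OF core(3) assms(5)] by simp_all
  fix \<psi>
  assume "hom K G \<psi>"
  with K show False
    using core_dprod_card_left_le_1[OF core(1,3)] assms(4) by fastforce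
next
  fix \<psi>
  assume "hom G K \<psi>"
  moreover have "verts G \<noteq> {}"
    using assms(4) by auto
  ultimately have "card (verts K) \<le> 1"
    using core_dprod_card_right_le_1[OF core] by blast
  moreover have fin: "finite (verts K)"
    using core(3) unfolding graph_def by blast
  moreover have K: "w \<in> verts K" "w' \<in> verts K"
    using graph_arcsD[OF core(3) assms(5)] by simp_all
  ultimately have "verts K = {w}" "w' = w"
    by (auto simp: card_le_Suc0_iff_eq)
  then have "iso K K1star"
    using assms(5) by (intro iso_K1starI) simp_all
  with assms(6) show False ..
qed

section \<open>Isomorphic copies on the naturals\<close>

definition iso_pair :: "'a graph \<Rightarrow> 'b graph \<Rightarrow> ('a \<Rightarrow> 'b) \<Rightarrow> ('b \<Rightarrow> 'a) \<Rightarrow> bool" where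
  "iso_pair G H h h' \<longleftrightarrow> hom G H h \<and> hom H G h' \<and>
     (\<forall>x\<in>verts G. h' (h x) = x) \<and> (\<forall>y\<in>verts H. h (h' y) = y)"

lemma nat_copy:
  assumes "graph G"
  obtains G' :: "nat graph" and h h' where "graph G'" "iso_pair G' G h h'"
proof -
  have fin: "finite (verts G)"
    using assms unfolding graph_def by blast
  obtain h where h: "bij_betw h {0..<card (verts G)} (verts G)"
    using ex_bij_betw_nat_finite[OF fin] by blast
  define G' where "G' = \<lparr>verts = {0..<card (verts G)},
     arcs = {(a, b). a < card (verts G) \<and> b < card (verts G) \<and> (h a, h b) \<in> arcs G}\<rparr>"
  define h' where "h' = the_inv_into {0..<card (verts G)} h"
  have h'_bij: "bij_betw h' (verts G) (verts G')"
    using bij_betw_the_inv_into[OF h] unfolding G'_def h'_def by simp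
  have "graph G'"
    using graph_symD[OF assms] unfolding G'_def graph_def by (auto simp: sym_def)
  moreover have "hom G' G h"
    using h unfolding hom_def G'_def by (auto simp: bij_betw_def)
  moreover have "hom G G' h'"
    unfolding hom_def
  proof (intro conjI ballI allI impI)
    fix x assume "x \<in> verts G"
    then show "h' x \<in> verts G'"
      using h'_bij by (rule bij_betw_apply[rotated])
  next
    fix x y assume xy: "(x, y) \<in> arcs G"
    then have "h' x \<in> verts G'" "h' y \<in> verts G'" "h (h' x) = x" "h (h' y) = y"
      using graph_arcsD[OF assms xy] h'_bij h unfolding h'_def
      by (auto simp: bij_betw_apply f_the_inv_into_f_bij_betw)
    with xy show "(h' x, h' y) \<in> arcs G'"
      unfolding G'_def by simp
  qed
  moreover have "\<forall>a\<in>verts G'. h' (h a) = a"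
    using h unfolding G'_def h'_def by (simp add: bij_betw_def the_inv_into_f_f)
  moreover have "\<forall>x\<in>verts G. h (h' x) = x"
    using h unfolding h'_def by (simp add: f_the_inv_into_f_bij_betw)
  ultimately show ?thesis
    using that unfolding iso_pair_def by blast
qed

lemma iso_pair_sym: "iso_pair G H h h' \<Longrightarrow> iso_pair H G h' h"
  unfolding iso_pair_def by blast

lemma connected_graph_iso_pair:
  assumes "connected_graph G" "iso_pair G H h h'"
  shows "connected_graph H"
proof (rule connected_graph_hom_onto[OF _ _ assms(1)])
  show "hom G H h"
    using assms(2) unfolding iso_pair_def by blast
  show "h ` verts G = verts H"
  proof
    show "h ` verts G \<subseteq> verts H"
      using \<open>hom G H h\<close> unfolding hom_def by blast
    show "verts H \<subseteq> h ` verts G"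
    proof
      fix y assume "y \<in> verts H"
      then have "h' y \<in> verts G" "y = h (h' y)"
        using assms(2) unfolding iso_pair_def hom_def by auto
      then show "y \<in> h ` verts G"
        by (rule rev_image_eqI)
    qed
  qed
qed

lemma core_iso_pair:
  assumes "core G" "graph H" "iso_pair G H h h'"
  shows "core H"
  using core_retract[OF assms(1,2)] assms(3) unfolding iso_pair_def by blast

lemma incomparable_iso_pair:
  assumes "incomparable G K" "iso_pair G H h h'"
  shows "incomparable H K"
  using assms hom_comp unfolding incomparable_def iso_pair_def by metis

text \<open>The definition of true projectivity only quantifies over cores on \<open>nat\<close>;
  this version applies to cores of any type.\<close>
lemma truly_projective_idempotent_hom:
  assumes "truly_projective G" "s \<ge> 2"
    and W: "graph W" "connected_graph W" "core W" "incomparable W G"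
    and f: "hom (dprod (gpow G s) W) G f" "\<And>x y. x \<in> verts G \<Longrightarrow> y \<in> verts W \<Longrightarrow> f (replicate s x, y) = x"
  obtains i where "i < s" "\<And>xs y. xs \<in> verts (gpow G s) \<Longrightarrow> y \<in> verts W \<Longrightarrow> f (xs, y) = xs ! i"
proof -
  obtain W' :: "nat graph" and h h' where "graph W'" and iso: "iso_pair W' W h h'"
    using nat_copy[OF W(1)] .
  then have W': "connected_graph W'" "core W'" "incomparable W' G"
    using connected_graph_iso_pair[OF W(2)] core_iso_pair[OF W(3)] incomparable_iso_pair[OF W(4)]
      iso_pair_sym[OF iso] by blast+
  have "hom (dprod (gpow G s) W') (dprod (gpow G s) W) (map_prod id h)"
    using iso unfolding iso_pair_def hom_def dprod_def by auto
  then have "hom (dprod (gpow G s) W') G (f \<circ> map_prod id h)"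
    using f(1) by (rule hom_comp)
  moreover have "(f \<circ> map_prod id h) (replicate s x, y) = x" if "x \<in> verts G" "y \<in> verts W'" for x y
    using f(2) that iso unfolding iso_pair_def hom_def by simp
  ultimately obtain i where "i < s" and proj: "\<forall>v\<in>verts (dprod (gpow G s) W'). (f \<circ> map_prod id h) v = fst v ! i"
    using assms(1,2) W' unfolding truly_projective_def by blast
  have "f (xs, y) = xs ! i" if "xs \<in> verts (gpow G s)" "y \<in> verts W" for xs y
  proof -
    have "h' y \<in> verts W'" "h (h' y) = y"
      using iso that(2) unfolding iso_pair_def hom_def by blast+
    then show ?thesis
      using proj that(1) by force
  qed
  with \<open>i < s\<close> show ?thesis
    using that by blast
qed

section \<open>Polymorphisms into a truly projective factor\<close>

definition fibrewise :: "('a \<Rightarrow> 'b \<Rightarrow> 'a) \<Rightarrow> 'a \<times> 'b \<Rightarrow> 'a \<times> 'b" where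
  "fibrewise d = (\<lambda>(x, r). (d x r, r))"

lemma fibrewise_apply [simp]: "fibrewise d (x, r) = (d x r, r)"
  by (simp add: fibrewise_def)

lemma fibrewise_endo_arcs:
  assumes "hom (dprod G K) (dprod G K) (fibrewise d)" "(x, y) \<in> arcs G" "(r, r') \<in> arcs K"
  shows "(d x r, d y r') \<in> arcs G"
proof -
  have "((x, r), (y, r')) \<in> arcs (dprod G K)"
    using assms(2,3) by simp
  then have "(fibrewise d (x, r), fibrewise d (y, r')) \<in> arcs (dprod G K)"
    using assms(1) unfolding hom_def by blast
  then show ?thesis
    by simp
qed

lemma fibrewise_endo_nbr:
  assumes core: "core (dprod G K)" "graph G" "graph K"
    and e: "hom (dprod G K) (dprod G K) (fibrewise d)"
    and "(r, m) \<in> arcs K" "x \<in> verts G" "(d x r, z) \<in> arcs G"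
  obtains y where "(x, y) \<in> arcs G" "z = d y m"
proof -
  obtain ei where ei: "hom (dprod G K) (dprod G K) ei"
    "\<And>p. p \<in> verts (dprod G K) \<Longrightarrow> ei (fibrewise d p) = p"
    "\<And>p. p \<in> verts (dprod G K) \<Longrightarrow> fibrewise d (ei p) = p"
    using core_endo_inverse[OF core(1) e] by blast
  have arc: "((d x r, r), (z, m)) \<in> arcs (dprod G K)"
    using assms(5,7) by simp
  then have "(z, m) \<in> verts (dprod G K)" "r \<in> verts K"
    using graph_arcsD[OF graph_dprod[OF core(2,3)] arc] by auto
  moreover obtain y m' where y: "ei (z, m) = (y, m')"
    by (cases "ei (z, m)")
  ultimately have "m' = m" "z = d y m"
    using ei(3)[of "(z, m)"] by auto
  have "ei (d x r, r) = (x, r)"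
    using ei(2)[of "(x, r)"] \<open>x \<in> verts G\<close> \<open>r \<in> verts K\<close> by simp
  with arc y \<open>m' = m\<close> have "((x, r), (y, m)) \<in> arcs (dprod G K)"
    using ei(1) unfolding hom_def by metis
  then show ?thesis
    using that \<open>z = d y m\<close> by auto
qed

lemma fibrewise_endo_even_step:
  assumes core: "core (dprod G K)" "graph G" "graph K"
    and e: "hom (dprod G K) (dprod G K) (fibrewise d)"
    and "(r, m) \<in> arcs K" "(m, r') \<in> arcs K" "x \<in> verts G"
  shows "d x r = d x r'"
proof (rule core_twins_eq)
  \<comment> \<open>Both have neighbourhood \<open>{d y m | y. (x, y) \<in> arcs G}\<close>.\<close>
  show "core G"
    using core_dprod_left[OF core assms(5)] .
  have "r \<in> verts K" "r' \<in> verts K" "(m, r) \<in> arcs K" "(r', m) \<in> arcs K"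
    using graph_arcsD[OF core(3)] graph_symD[OF core(3)] assms(5,6) by blast+
  moreover have "d x t \<in> verts G" if "t \<in> verts K" for t
  proof -
    have "(x, t) \<in> verts (dprod G K)"
      using \<open>x \<in> verts G\<close> that by simp
    then have "fibrewise d (x, t) \<in> verts (dprod G K)"
      using e unfolding hom_def by blast
    then show ?thesis
      by simp
  qed
  ultimately show "d x r \<in> verts G" "d x r' \<in> verts G"
    by simp_all
  fix z
  show "(d x r, z) \<in> arcs G \<longleftrightarrow> (d x r', z) \<in> arcs G"
  proof
    assume "(d x r, z) \<in> arcs G"
    then obtain y where "(x, y) \<in> arcs G" "z = d y m"
      using fibrewise_endo_nbr[OF core e assms(5,7)] by blast
    then show "(d x r', z) \<in> arcs G"
      using fibrewise_endo_arcs[OF e] \<open>(r', m) \<in> arcs K\<close> by blast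
  next
    assume "(d x r', z) \<in> arcs G"
    then obtain y where "(x, y) \<in> arcs G" "z = d y m"
      using fibrewise_endo_nbr[OF core e \<open>(r', m) \<in> arcs K\<close> assms(7)] by blast
    then show "(d x r, z) \<in> arcs G"
      using fibrewise_endo_arcs[OF e] assms(5) by blast
  qed
qed

lemma fibrewise_endo_even_walk:
  assumes core: "core (dprod G K)" "graph G" "graph K"
    and e: "hom (dprod G K) (dprod G K) (fibrewise d)"
    and "(r, r') \<in> (arcs K O arcs K)\<^sup>*" "x \<in> verts G"
  shows "d x r' = d x r"
  using assms(5)
proof (induction rule: rtrancl_induct)
  case (step y z)
  from \<open>(y, z) \<in> arcs K O arcs K\<close> obtain m where "(y, m) \<in> arcs K" "(m, z) \<in> arcs K"
    by (rule relcompE) simp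
  then have "d x y = d x z"
    using fibrewise_endo_even_step[OF core e _ _ assms(6)] by blast
  with step.IH show ?case
    by simp
qed simp

lemma hom_dprod_diagonal:
  assumes "hom (dprod (gpow G s) K) G g"
  shows "hom (dprod G K) (dprod G K) (fibrewise (\<lambda>x r. g (replicate s x, r)))"
  unfolding hom_def
proof (intro conjI ballI allI impI)
  fix p assume "p \<in> verts (dprod G K)"
  then show "fibrewise (\<lambda>x r. g (replicate s x, r)) p \<in> verts (dprod G K)"
    using assms unfolding hom_def by (cases p) (simp add: set_replicate_conv_if)
next
  fix p q assume "(p, q) \<in> arcs (dprod G K)"
  then show "(fibrewise (\<lambda>x r. g (replicate s x, r)) p, fibrewise (\<lambda>x r. g (replicate s x, r)) q) \<in> arcs (dprod G K)"
    using assms unfolding hom_def by (cases p, cases q) simp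
qed

lemma dprod_polymorphism_factors:
  assumes core: "core (dprod G K)" "graph G" "graph K"
    and G: "truly_projective G" "s \<ge> 2"
    and K: "connected_graph K" "core K" "incomparable K G"
    and g: "hom (dprod (gpow G s) K) G g"
  obtains i where "i < s"
    "\<And>xs r. xs \<in> verts (gpow G s) \<Longrightarrow> r \<in> verts K \<Longrightarrow> g (xs, r) = g (replicate s (xs ! i), r)"
proof -
  define d where "d x r = g (replicate s x, r)" for x r
  define e where "e = fibrewise d"
  have "hom (dprod G K) (dprod G K) e"
    using hom_dprod_diagonal[OF g] unfolding e_def d_def .
  then obtain ei where ei: "hom (dprod G K) (dprod G K) ei"
    "\<And>p. p \<in> verts (dprod G K) \<Longrightarrow> ei (e p) = p"
    "\<And>p. p \<in> verts (dprod G K) \<Longrightarrow> e (ei p) = p"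
    using core_endo_inverse[OF core(1)] by blast
  have snd_ei: "snd (ei p) = snd p" if "p \<in> verts (dprod G K)" for p
  proof -
    obtain a b where "ei p = (a, b)"
      by (cases "ei p")
    with ei(3)[OF that] show ?thesis
      unfolding e_def by auto
  qed
  \<comment> \<open>Undoing the diagonal of \<open>g\<close> fibrewise yields an idempotent polymorphism.\<close>
  define P where "P = (\<lambda>(xs, r). fst (ei (g (xs, r), r)))"
  have g_vert: "(g (xs, r), r) \<in> verts (dprod G K)" if "xs \<in> verts (gpow G s)" "r \<in> verts K" for xs r
    using g that unfolding hom_def by simp
  have P_hom: "hom (dprod (gpow G s) K) G P"
    unfolding hom_def
  proof (intro conjI ballI allI impI)
    fix v assume "v \<in> verts (dprod (gpow G s) K)"
    then obtain xs r where "v = (xs, r)" "xs \<in> verts (gpow G s)" "r \<in> verts K"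
      by auto
    then have "ei (g (xs, r), r) \<in> verts (dprod G K)"
      using ei(1) g_vert unfolding hom_def by blast
    then show "P v \<in> verts G"
      unfolding P_def \<open>v = (xs, r)\<close> by (simp add: mem_Times_iff)
  next
    fix v v' assume vv': "(v, v') \<in> arcs (dprod (gpow G s) K)"
    obtain xs r ys r' where v: "v = (xs, r)" "v' = (ys, r')"
      by (cases v, cases v')
    then have "((g (xs, r), r), (g (ys, r'), r')) \<in> arcs (dprod G K)"
      using g vv' unfolding hom_def by simp
    then have "(ei (g (xs, r), r), ei (g (ys, r'), r')) \<in> arcs (dprod G K)"
      using ei(1) unfolding hom_def by blast
    then show "(P v, P v') \<in> arcs G"
      unfolding P_def v by (simp add: dprod_arcsD)
  qed
  have P_idem: "P (replicate s x, r) = x" if "x \<in> verts G" "r \<in> verts K" for x r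
    using ei(2)[of "(x, r)"] that unfolding P_def e_def d_def by simp
  obtain i where "i < s" and P: "\<And>xs r. xs \<in> verts (gpow G s) \<Longrightarrow> r \<in> verts K \<Longrightarrow> P (xs, r) = xs ! i"
    using truly_projective_idempotent_hom[OF G core(3) K P_hom P_idem] by blast
  have "g (xs, r) = d (xs ! i) r" if "xs \<in> verts (gpow G s)" "r \<in> verts K" for xs r
  proof -
    have "ei (g (xs, r), r) = (xs ! i, r)"
      using P[OF that] snd_ei[OF g_vert[OF that]] unfolding P_def by (simp add: prod_eq_iff)
    then have "e (xs ! i, r) = (g (xs, r), r)"
      using ei(3)[OF g_vert[OF that]] by simp
    then show ?thesis
      unfolding e_def by simp
  qed
  with \<open>i < s\<close> show ?thesis
    using that unfolding d_def by blast
qed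

lemma dprod_polymorphism_edge:
  assumes core: "core (dprod G K)" "graph G" "graph K"
    and G: "truly_projective G" "s \<ge> 2"
    and K: "connected_graph K" "core K" "incomparable K G"
    and g: "hom (dprod (gpow G s) K) G g"
    and odd: "(w, w') \<in> arcs K" "(w, w') \<in> (arcs K O arcs K)\<^sup>*"
    and xs_ys: "(xs, ys) \<in> arcs (gpow G s)"
  shows "(g (xs, w), g (ys, w)) \<in> arcs G"
proof -
  obtain i where "i < s" and factor:
    "\<And>xs r. xs \<in> verts (gpow G s) \<Longrightarrow> r \<in> verts K \<Longrightarrow> g (xs, r) = g (replicate s (xs ! i), r)"
    using dprod_polymorphism_factors[OF core G K g] by blast
  define d where "d x r = g (replicate s x, r)" for x r
  have e: "hom (dprod G K) (dprod G K) (fibrewise d)"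
    using hom_dprod_diagonal[OF g] unfolding d_def .
  have xy: "(xs ! i, ys ! i) \<in> arcs G"
    using xs_ys \<open>i < s\<close> by simp
  then have "(d (xs ! i) w, d (ys ! i) w') \<in> arcs G"
    using odd(1) by (rule fibrewise_endo_arcs[OF e])
  moreover have "d (ys ! i) w' = d (ys ! i) w"
    using fibrewise_endo_even_walk[OF core e odd(2)] graph_arcsD[OF core(2) xy] by blast
  moreover have "w \<in> verts K"
    using graph_arcsD[OF core(3) odd(1)] by blast
  ultimately show ?thesis
    using factor gpow_arcsD[OF core(2) xs_ys] unfolding d_def by simp
qed

section \<open>The edge gadget\<close>

lemma finite_list_length_ge_2:
  assumes "finite A" "A \<noteq> {}"
  obtains L where "set L = A" "length L \<ge> 2"
proof -
  obtain L0 where "set L0 = A"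
    using finite_list[OF assms(1)] by blast
  moreover have "length L0 \<ge> 1"
    using assms(2) calculation by (cases L0) simp_all
  ultimately show ?thesis
    using that[of "L0 @ L0"] by simp
qed

definition edge_gadget :: "'c graph \<Rightarrow> 'c \<Rightarrow> 'c \<Rightarrow> 'a graph \<Rightarrow> 'b graph \<Rightarrow> 'b \<Rightarrow> bool" where
  "edge_gadget F u v G K w \<longleftrightarrow> graph F \<and> u \<in> verts F \<and> v \<in> verts F \<and>
     (\<forall>x y. (x, y) \<in> arcs G \<longrightarrow> (\<exists>f. hom F (dprod G K) f \<and> f u = (x, w) \<and> f v = (y, w))) \<and>
     (\<forall>f. hom F (dprod G K) f \<longrightarrow> (fst (f u), fst (f v)) \<in> arcs G)"

lemma edge_gadget_nat_copy:
  assumes "edge_gadget F u v G K w"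
  obtains F' :: "nat graph" and u' v' where "edge_gadget F' u' v' G K w"
proof -
  have "graph F"
    using assms unfolding edge_gadget_def by blast
  then obtain F' :: "nat graph" and h h' where "graph F'" and iso: "iso_pair F' F h h'"
    by (rule nat_copy)
  have "edge_gadget F' (h' u) (h' v) G K w"
    unfolding edge_gadget_def
  proof (intro conjI allI impI)
    show "graph F'" by fact
    show "h' u \<in> verts F'" "h' v \<in> verts F'"
      using assms iso unfolding edge_gadget_def iso_pair_def hom_def by blast+
  next
    fix x y assume "(x, y) \<in> arcs G"
    then obtain f where "hom F (dprod G K) f" "f u = (x, w)" "f v = (y, w)"
      using assms unfolding edge_gadget_def by blast
    moreover have "h (h' u) = u" "h (h' v) = v"
      using assms iso unfolding edge_gadget_def iso_pair_def by blast+
    moreover have "hom F' F h"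
      using iso unfolding iso_pair_def by blast
    ultimately show "\<exists>f. hom F' (dprod G K) f \<and> f (h' u) = (x, w) \<and> f (h' v) = (y, w)"
      by (intro exI[of _ "f \<circ> h"]) (simp add: hom_comp)
  next
    fix f assume "hom F' (dprod G K) f"
    then have "hom F (dprod G K) (f \<circ> h')"
      using hom_comp iso unfolding iso_pair_def by blast
    then have "(fst ((f \<circ> h') u), fst ((f \<circ> h') v)) \<in> arcs G"
      using assms unfolding edge_gadget_def by blast
    then show "(fst (f (h' u)), fst (f (h' v))) \<in> arcs G"
      by simp
  qed
  then show ?thesis
    by (rule that)
qed

lemma hom_dprod_gpow_coordinate:
  assumes "j < n"
  shows "hom (dprod (gpow G n) K) (dprod G K) (\<lambda>(xs, r). (xs ! j, r))"
  unfolding hom_def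
proof (intro conjI ballI allI impI)
  fix v assume v: "v \<in> verts (dprod (gpow G n) K)"
  obtain xs r where "v = (xs, r)"
    by (cases v)
  moreover have "xs ! j \<in> set xs"
    using assms v \<open>v = (xs, r)\<close> by simp
  ultimately show "(\<lambda>(xs, r). (xs ! j, r)) v \<in> verts (dprod G K)"
    using v by auto
qed (use assms in auto)

lemma dprod_gpow_edge_gadget:
  assumes core: "core (dprod G K)" "graph G" "graph K"
    and G: "truly_projective G"
    and K: "connected_graph K" "core K" "incomparable K G"
    and odd: "(w, w') \<in> arcs K" "(w, w') \<in> (arcs K O arcs K)\<^sup>*"
    and L: "set L = arcs G" "length L \<ge> 2"
  shows "edge_gadget (dprod (gpow G (length L)) K) (map fst L, w) (map snd L, w) G K w"
proof -
  have "(fst (L ! i), snd (L ! i)) \<in> arcs G" if "i < length L" for i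
    using nth_mem[OF that] L(1) by simp
  then have uv: "(map fst L, map snd L) \<in> arcs (gpow G (length L))"
    by simp
  have "w \<in> verts K"
    using graph_arcsD[OF core(3) odd(1)] by blast
  show ?thesis
    unfolding edge_gadget_def
  proof (intro conjI allI impI)
    show "graph (dprod (gpow G (length L)) K)"
      using graph_dprod[OF graph_gpow[OF core(2)] core(3)] .
    show "(map fst L, w) \<in> verts (dprod (gpow G (length L)) K)"
      "(map snd L, w) \<in> verts (dprod (gpow G (length L)) K)"
      using gpow_arcsD[OF core(2) uv] \<open>w \<in> verts K\<close> by simp_all
  next
    fix x y assume "(x, y) \<in> arcs G"
    then have "(x, y) \<in> set L"
      using L(1) by blast
    then obtain j where j: "j < length L" "L ! j = (x, y)"
      by (auto simp: in_set_conv_nth)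
    then show "\<exists>f. hom (dprod (gpow G (length L)) K) (dprod G K) f \<and>
        f (map fst L, w) = (x, w) \<and> f (map snd L, w) = (y, w)"
      using hom_dprod_gpow_coordinate[OF j(1)]
      by (intro exI[of _ "\<lambda>(xs, r). (xs ! j, r)"]) simp
  next
    fix f assume "hom (dprod (gpow G (length L)) K) (dprod G K) f"
    then have "hom (dprod (gpow G (length L)) K) G (fst \<circ> f)"
      using hom_fst_dprod by (rule hom_comp)
    from dprod_polymorphism_edge[OF core G L(2) K this odd uv]
    show "(fst (f (map fst L, w)), fst (f (map snd L, w))) \<in> arcs G"
      by simp
  qed
qed

theorem lemma17:
  fixes H1 :: "'a graph" and R :: "'b graph" and w :: 'b
  assumes "graph H1" and "graph R"
    and "connected_graph (dprod H1 R)" and "core (dprod H1 R)"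
    and "\<not> trivial_graph (dprod H1 R)"
    and "truly_projective H1"
    and "\<not> iso R K1star"
    and "w \<in> verts R"
  shows "\<exists>(F :: nat graph) u v. graph F \<and> u \<in> verts F \<and> v \<in> verts F \<and>
    (\<forall>x y. (x, y) \<in> arcs H1 \<longrightarrow>
        (\<exists>f. hom F (dprod H1 R) f \<and> f u = (x, w) \<and> f v = (y, w))) \<and>
    (\<forall>f. hom F (dprod H1 R) f \<longrightarrow> (fst (f u), fst (f v)) \<in> arcs H1)"
proof -
  note core = assms(4,1,2)
  have card: "card (verts H1) \<ge> 3"
    using assms(6) unfolding truly_projective_def by blast
  then obtain x y w0 where xy: "(x, y) \<in> arcs H1" and ww0: "(w, w0) \<in> arcs R"
    using connected_dprod_edges[OF assms(3,1) _ assms(8)] by fastforce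
  then have "snd ` verts (dprod H1 R) = verts R"
    using graph_arcsD[OF assms(1) xy] by force
  then have R: "connected_graph R" "core R" "incomparable R H1"
    using connected_graph_hom_onto[OF hom_snd_dprod _ assms(3)] core_dprod_right[OF core xy]
      core_dprod_incomparable[OF core _ ww0 assms(7)] card by auto
  obtain w' where odd: "(w, w') \<in> arcs R" "(w, w') \<in> (arcs R O arcs R)\<^sup>*"
    using core_dprod_odd_neighbour[OF core R(1) assms(8) xy ww0 card] .
  have "finite (arcs H1)"
    using assms(1) unfolding graph_def by (blast intro: finite_subset)
  then obtain L where L: "set L = arcs H1" "length L \<ge> 2"
    using finite_list_length_ge_2 xy by blast
  obtain F :: "nat graph" and u v where "edge_gadget F u v H1 R w"
    using edge_gadget_nat_copy[OF dprod_gpow_edge_gadget[OF core assms(6) R odd L]] .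
  then show ?thesis
    unfolding edge_gadget_def by blast
qed

end
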